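(* Under the standing assumptions (in particular $k\ge\frac{\tau\ln\tau}{\tau-1}$ and $r<r_{cr}$), let $\varphi(s)=r\ln\!\left(1+\frac{p}{1-p}s^k\right)-s$ and $-\beta=\max_{\eta_2\le s\le\eta_3}\varphi(s)$. Then $\beta>0$, and $\Phi(ns)\le\exp\{-(\beta+o(1))m\}$ holds uniformly for all $s\in[\eta_2,\eta_3]$ with $ns$ an integer, as $n\to\infty$.
   Context: Parameters: integer $k\ge2$, constants $\alpha>0$, $r>0$, $0<p<1$; $d=n^{\alpha}$ (treated as an integer), $m=n\ln d$, $\tau=\frac1{1-p}$, $r_{cr}=\frac1{\ln\tau}$. Standing assumptions: $(2k-1)\alpha>1$, $k\alpha\le1$, $k\ge\frac{\tau\ln\tau}{\tau-1}$, and $r<r_{cr}$. Notation: $f(s)=1+\frac{p}{1-p}\cdot\frac{s^k-d^{-k}}{1-d^{-k}}$ for $s\in[0,1]$; $B(S)=\binom{n}{S}\left(\frac1d\right)^{S}\left(1-\frac1d\right)^{n-S}$; $W(S)=f(S/n)^{rm}$; $\Phi(S)=B(S)W(S)$. Let $\alpha_0=\frac{(2k-1)\alpha-1}{2(k-1)}$, and let $\eta_2,\eta_3,\mu$ be constants with $0<\eta_2<\eta_3<1$, $\alpha_0/\alpha-\mu\eta_2^{k-1}>0$, $\mu>\frac{kpr}{1-p}$, and $r\ln(1-p)+\eta_3>0$. *)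

theory Defs
  imports "HOL-Analysis.Analysis"
begin

definition dd :: "real \<Rightarrow> nat \<Rightarrow> real" where
  "dd \<alpha> n = real n powr \<alpha>"

definition mm :: "real \<Rightarrow> nat \<Rightarrow> real" where
  "mm \<alpha> n = real n * ln (dd \<alpha> n)"

definition tau :: "real \<Rightarrow> real" where
  "tau p = 1 / (1 - p)"

definition r_cr :: "real \<Rightarrow> real" where
  "r_cr p = 1 / ln (tau p)"

definition ff :: "nat \<Rightarrow> real \<Rightarrow> real \<Rightarrow> nat \<Rightarrow> real \<Rightarrow> real" where
  "ff k \<alpha> p n s = 1 + p / (1 - p) * ((s ^ k - (dd \<alpha> n) powi (- int k)) / (1 - (dd \<alpha> n) powi (- int k)))"

definition BB :: "real \<Rightarrow> nat \<Rightarrow> nat \<Rightarrow> real" where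
  "BB \<alpha> n S = real (n choose S) * (1 / dd \<alpha> n) ^ S * (1 - 1 / dd \<alpha> n) ^ (n - S)"

definition WW :: "nat \<Rightarrow> real \<Rightarrow> real \<Rightarrow> real \<Rightarrow> nat \<Rightarrow> nat \<Rightarrow> real" where
  "WW k \<alpha> r p n S = ff k \<alpha> p n (real S / real n) powr (r * mm \<alpha> n)"

definition Phi :: "nat \<Rightarrow> real \<Rightarrow> real \<Rightarrow> real \<Rightarrow> nat \<Rightarrow> nat \<Rightarrow> real" where
  "Phi k \<alpha> r p n S = BB \<alpha> n S * WW k \<alpha> r p n S"

definition phi :: "nat \<Rightarrow> real \<Rightarrow> real \<Rightarrow> real \<Rightarrow> real" where
  "phi k r p s = r * ln (1 + p / (1 - p) * s ^ k) - s"

definition alpha0 :: "nat \<Rightarrow> real \<Rightarrow> real" where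
  "alpha0 k \<alpha> = ((2 * real k - 1) * \<alpha> - 1) / (2 * (real k - 1))"

end

theory Submission
  imports Defs "HOL-Real_Asymp.Real_Asymp"
begin

text \<open>
  With \<open>a = p/(1-p)\<close>, the hypothesis on \<open>k\<close> says \<open>(1+a) ln(1+a) \<le> k a\<close>; since
  \<open>(1+y) ln(1+y)/y\<close> is increasing, this makes \<open>ln(1 + a t^k)/t\<close> increasing on \<open>(0,1]\<close>,
  so \<open>ln(1 + a s^k) \<le> s ln(1+a)\<close>. Hence \<open>\<phi>(s) \<le> s (r ln \<tau> - 1) < 0\<close> because \<open>r < r_cr\<close>,
  which gives \<open>\<beta> > 0\<close>. For the estimate, \<open>B(S) \<le> 2^n d^{-S} = exp(n ln 2 - s m)\<close> and
  \<open>W(S) \<le> (1 + a s^k)^{rm}\<close>, so \<open>\<Phi>(ns) \<le> exp(n ln 2 + m \<phi>(s))\<close>, and \<open>n ln 2 = o(m)\<close>.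
\<close>

lemma one_plus_mult_ln_div_mono:
  fixes y a :: real
  assumes "0 < y" "y \<le> a"
  shows "(1 + y) * ln (1 + y) / y \<le> (1 + a) * ln (1 + a) / a"
proof (rule DERIV_nonneg_imp_nondecreasing[OF assms(2)])
  fix x :: real
  assume "y \<le> x" "x \<le> a"
  then have x: "x > 0" using assms by linarith
  have "((\<lambda>x. (1 + x) * ln (1 + x) / x) has_real_derivative
          ((ln (1 + x) + 1) * x - (1 + x) * ln (1 + x)) / (x * x)) (at x)"
    using x by (auto intro!: derivative_eq_intros)
  moreover have "((ln (1 + x) + 1) * x - (1 + x) * ln (1 + x)) / (x * x) = (x - ln (1 + x)) / x\<^sup>2"
    by (simp add: algebra_simps power2_eq_square)
  moreover have "ln (1 + x) \<le> x"
    using x by (intro ln_add_one_self_le_self) simp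
  ultimately show "\<exists>d. ((\<lambda>x. (1 + x) * ln (1 + x) / x) has_real_derivative d) (at x) \<and> 0 \<le> d"
    by auto
qed

lemma ln_one_plus_le_mult_div:
  fixes y a c :: real
  assumes "a > 0" "(1 + a) * ln (1 + a) \<le> c * a" "0 < y" "y \<le> a"
  shows "ln (1 + y) \<le> c * y / (1 + y)"
proof -
  have "(1 + y) * ln (1 + y) / y \<le> (1 + a) * ln (1 + a) / a"
    using assms(3,4) by (rule one_plus_mult_ln_div_mono)
  also have "\<dots> \<le> c"
    using assms(1,2) by (simp add: divide_le_eq)
  finally show ?thesis
    using assms(3) by (simp add: field_simps)
qed

lemma ln_one_plus_mult_power_le:
  fixes a t :: real and k :: nat
  assumes "a > 0" "k \<ge> 1" "(1 + a) * ln (1 + a) \<le> real k * a" "0 < t" "t \<le> 1"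
  shows "ln (1 + a * t ^ k) \<le> t * ln (1 + a)"
proof -
  have "ln (1 + a * t ^ k) / t \<le> ln (1 + a * 1 ^ k) / 1"
  proof (rule DERIV_nonneg_imp_nondecreasing[OF assms(5)])
    fix x :: real
    assume x: "t \<le> x" "x \<le> 1"
    then have "x > 0" using assms by linarith
    then have y: "0 < a * x ^ k" "a * x ^ k \<le> a" "1 + a * x ^ k > 0"
      using x assms(1) by (simp_all add: power_le_one add_pos_nonneg)
    have "((\<lambda>x. ln (1 + a * x ^ k) / x) has_real_derivative
          ((real k * a * x ^ (k - 1) / (1 + a * x ^ k) * x - ln (1 + a * x ^ k)) / x\<^sup>2)) (at x)"
      using \<open>x > 0\<close> y(3) by (auto intro!: derivative_eq_intros simp: field_simps power2_eq_square)
    moreover have "ln (1 + a * x ^ k) \<le> real k * (a * x ^ k) / (1 + a * x ^ k)"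
      using assms(1,3) y(1,2) by (rule ln_one_plus_le_mult_div)
    then have "0 \<le> (real k * a * x ^ (k - 1) / (1 + a * x ^ k) * x - ln (1 + a * x ^ k)) / x\<^sup>2"
      using assms(2) by (cases k) (auto simp: field_simps)
    ultimately show "\<exists>d. ((\<lambda>x. ln (1 + a * x ^ k) / x) has_real_derivative d) (at x) \<and> 0 \<le> d"
      by blast
  qed
  then show ?thesis
    using assms(4) by (simp add: field_simps)
qed

lemma phi_le_linear:
  fixes k :: nat and r p s :: real
  assumes "k \<ge> 1" "r \<ge> 0" "0 < p" "p < 1"
    and "real k \<ge> tau p * ln (tau p) / (tau p - 1)"
    and "0 < s" "s \<le> 1"
  shows "phi k r p s \<le> s * (r * ln (tau p) - 1)"
proof -
  define a where "a = p / (1 - p)"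
  have a: "a > 0" and tau: "tau p = 1 + a"
    using assms(3,4) by (simp_all add: a_def tau_def field_simps)
  have "(1 + a) * ln (1 + a) \<le> real k * a"
    using assms(5) a by (simp add: tau divide_le_eq)
  then have "ln (1 + a * s ^ k) \<le> s * ln (1 + a)"
    using a assms(1,6,7) by (intro ln_one_plus_mult_power_le) auto
  then have "phi k r p s \<le> r * (s * ln (1 + a)) - s"
    using assms(2) by (simp add: phi_def a_def mult_left_mono)
  then show ?thesis
    by (simp add: tau algebra_simps)
qed

lemma BB_le:
  assumes "dd \<alpha> n \<ge> 1"
  shows "BB \<alpha> n S \<le> 2 ^ n * (1 / dd \<alpha> n) ^ S"
proof -
  have "real (n choose S) \<le> 2 ^ n"
    using binomial_le_pow2[of n S] by (metis of_nat_le_iff of_nat_numeral of_nat_power)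
  moreover have "(1 - 1 / dd \<alpha> n) ^ (n - S) \<le> 1"
    using assms by (intro power_le_one) auto
  ultimately have "BB \<alpha> n S \<le> 2 ^ n * (1 / dd \<alpha> n) ^ S * 1"
    unfolding BB_def using assms by (intro mult_mono) auto
  then show ?thesis
    by simp
qed

lemma ff_bounds:
  assumes "k \<ge> 1" "0 < p" "p < 1" "dd \<alpha> n > 1" "1 / dd \<alpha> n \<le> s" "s \<le> 1"
  shows "0 \<le> ff k \<alpha> p n s" "ff k \<alpha> p n s \<le> 1 + p / (1 - p) * s ^ k"
proof -
  define \<epsilon> where "\<epsilon> = dd \<alpha> n powi (- int k)"
  have \<epsilon>: "\<epsilon> = (1 / dd \<alpha> n) ^ k"
    by (simp add: \<epsilon>_def power_int_minus_divide power_divide)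
  have "0 < \<epsilon>" "\<epsilon> < 1"
    using assms(1,4) by (simp_all add: \<epsilon> power_less_one_iff)
  moreover have "\<epsilon> \<le> s ^ k"
    unfolding \<epsilon> using assms(4,5) by (intro power_mono) auto
  moreover have "s ^ k \<le> 1"
    using assms(4,5,6) by (intro power_le_one) (auto intro: order.trans[rotated])
  ultimately have "0 \<le> (s ^ k - \<epsilon>) / (1 - \<epsilon>)" "(s ^ k - \<epsilon>) / (1 - \<epsilon>) \<le> s ^ k"
    by (auto simp: divide_le_eq algebra_simps mult_left_le)
  moreover have "p / (1 - p) > 0"
    using assms(2,3) by simp
  ultimately have "0 \<le> p / (1 - p) * ((s ^ k - \<epsilon>) / (1 - \<epsilon>))"
    "p / (1 - p) * ((s ^ k - \<epsilon>) / (1 - \<epsilon>)) \<le> p / (1 - p) * s ^ k"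
    by (simp_all only: mult_nonneg_nonneg mult_left_mono less_imp_le)
  moreover have "ff k \<alpha> p n s = 1 + p / (1 - p) * ((s ^ k - \<epsilon>) / (1 - \<epsilon>))"
    by (simp add: ff_def \<epsilon>_def)
  ultimately show "0 \<le> ff k \<alpha> p n s" "ff k \<alpha> p n s \<le> 1 + p / (1 - p) * s ^ k"
    by linarith+
qed

lemma Phi_le_exp_phi:
  fixes n S k :: nat
  assumes "k \<ge> 1" "r \<ge> 0" "0 < p" "p < 1" "n > 0"
    and "dd \<alpha> n > 1" "1 / dd \<alpha> n \<le> real S / real n" "real S / real n \<le> 1"
  shows "Phi k \<alpha> r p n S \<le> exp (real n * ln 2 + mm \<alpha> n * phi k r p (real S / real n))"
proof -
  define s where "s = real S / real n"
  define d where "d = dd \<alpha> n"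
  define m where "m = mm \<alpha> n"
  have m: "m = real n * ln d" "m > 0"
    using assms(5,6) by (simp_all add: m_def mm_def d_def)
  have "1 + p / (1 - p) * s ^ k > 0"
    using assms(3,4,6,7) by (intro add_pos_nonneg) (auto simp: s_def)
  then have "(1 + p / (1 - p) * s ^ k) powr (r * m) = exp (r * m * ln (1 + p / (1 - p) * s ^ k))"
    by (simp add: powr_def)
  moreover have "ff k \<alpha> p n s powr (r * m) \<le> (1 + p / (1 - p) * s ^ k) powr (r * m)"
    using assms ff_bounds[of k p \<alpha> n s] m(2) by (intro powr_mono2) (auto simp: s_def)
  ultimately have "WW k \<alpha> r p n S \<le> exp (r * m * ln (1 + p / (1 - p) * s ^ k))"
    by (simp add: WW_def s_def m_def)
  moreover have "(1 / d) ^ S = exp (real S * ln (1 / d))"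
    using assms(6) by (simp add: exp_of_nat_mult d_def)
  then have "(1 / d) ^ S = exp (- s * m)"
    using assms(5,6) by (simp add: ln_div m s_def d_def)
  then have "BB \<alpha> n S \<le> exp (real n * ln 2) * exp (- s * m)"
    using BB_le[of \<alpha> n S] assms(6) by (simp add: d_def exp_of_nat_mult)
  ultimately have "Phi k \<alpha> r p n S
      \<le> exp (real n * ln 2) * exp (- s * m) * exp (r * m * ln (1 + p / (1 - p) * s ^ k))"
    unfolding Phi_def by (intro mult_mono) (auto simp: WW_def)
  also have "\<dots> = exp (real n * ln 2 + m * phi k r p s)"
    by (simp add: phi_def exp_add[symmetric] algebra_simps)
  finally show ?thesis
    by (simp add: s_def m_def)
qed

lemma SUP_phi_le:
  fixes k :: nat and r p \<eta>2 \<eta>3 :: real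
  assumes "k \<ge> 1" "r \<ge> 0" "0 < p" "p < 1"
    and "real k \<ge> tau p * ln (tau p) / (tau p - 1)" "r * ln (tau p) \<le> 1"
    and "0 < \<eta>2" "\<eta>2 \<le> \<eta>3" "\<eta>3 \<le> 1"
  shows "bdd_above (phi k r p ` {\<eta>2..\<eta>3})"
    and "(SUP s \<in> {\<eta>2..\<eta>3}. phi k r p s) \<le> \<eta>2 * (r * ln (tau p) - 1)"
proof -
  have "phi k r p s \<le> \<eta>2 * (r * ln (tau p) - 1)" if "s \<in> {\<eta>2..\<eta>3}" for s
  proof -
    have "phi k r p s \<le> s * (r * ln (tau p) - 1)"
      using that assms by (intro phi_le_linear) auto
    also have "\<dots> \<le> \<eta>2 * (r * ln (tau p) - 1)"
      using that assms(6) by (intro mult_right_mono_neg) auto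
    finally show ?thesis .
  qed
  then show "bdd_above (phi k r p ` {\<eta>2..\<eta>3})"
    by (intro bdd_aboveI2) auto
  show "(SUP s \<in> {\<eta>2..\<eta>3}. phi k r p s) \<le> \<eta>2 * (r * ln (tau p) - 1)"
    using \<open>\<And>s. s \<in> {\<eta>2..\<eta>3} \<Longrightarrow> _\<close> assms(8) by (intro cSUP_least) auto
qed

lemma eventually_Phi_le_exp:
  fixes k :: nat and \<alpha> r p \<eta>2 \<eta>3 \<beta> :: real
  assumes "k \<ge> 1" "\<alpha> > 0" "r \<ge> 0" "0 < p" "p < 1" "0 < \<eta>2" "\<eta>2 < 1" "\<eta>3 \<le> 1"
    and phi_le: "\<And>s. s \<in> {\<eta>2..\<eta>3} \<Longrightarrow> phi k r p s \<le> - \<beta>"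
  shows "\<forall>\<^sub>F n in sequentially. \<forall>S :: nat.
      \<eta>2 \<le> real S / real n \<and> real S / real n \<le> \<eta>3 \<longrightarrow>
      Phi k \<alpha> r p n S \<le> exp (- (\<beta> - ln 2 / (\<alpha> * ln (real n))) * mm \<alpha> n)"
proof -
  have "\<forall>\<^sub>F n in sequentially. dd \<alpha> n > 1 / \<eta>2"
    unfolding dd_def using assms(2) by real_asymp
  then have "\<forall>\<^sub>F n in sequentially. dd \<alpha> n > 1 / \<eta>2 \<and> n \<ge> 2"
    by (intro eventually_conj eventually_ge_at_top)
  then show ?thesis
  proof eventually_elim
    case (elim n)
    have mm: "mm \<alpha> n = real n * (\<alpha> * ln (real n))" and "ln (real n) > 0"
      using elim by (simp_all add: mm_def dd_def ln_powr)
    have "dd \<alpha> n > 0"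
      using elim by (simp add: dd_def)
    then have "1 / dd \<alpha> n < \<eta>2"
      using elim assms(6) by (simp add: field_simps)
    then have "1 / dd \<alpha> n < 1"
      using assms(7) by linarith
    then have "dd \<alpha> n > 1"
      using \<open>dd \<alpha> n > 0\<close> by (simp add: field_simps)
    show ?case
    proof (intro allI impI)
      fix S :: nat
      assume S: "\<eta>2 \<le> real S / real n \<and> real S / real n \<le> \<eta>3"
      have "1 / dd \<alpha> n \<le> real S / real n" "real S / real n \<le> 1"
        using S \<open>1 / dd \<alpha> n < \<eta>2\<close> assms(8) by linarith+
      then have "Phi k \<alpha> r p n S \<le> exp (real n * ln 2 + mm \<alpha> n * phi k r p (real S / real n))"
        using assms(1,3,4,5) elim \<open>dd \<alpha> n > 1\<close> by (intro Phi_le_exp_phi) simp_all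
      also have "\<dots> \<le> exp (real n * ln 2 + mm \<alpha> n * - \<beta>)"
        using mult_left_mono[OF phi_le, of "real S / real n" "mm \<alpha> n"] S mm
          \<open>ln (real n) > 0\<close> assms(2) by simp
      also have "real n * ln 2 + mm \<alpha> n * - \<beta> = - (\<beta> - ln 2 / (\<alpha> * ln (real n))) * mm \<alpha> n"
        using \<open>ln (real n) > 0\<close> elim assms(2) by (simp add: mm field_simps)
      finally show "Phi k \<alpha> r p n S \<le> exp (- (\<beta> - ln 2 / (\<alpha> * ln (real n))) * mm \<alpha> n)" .
    qed
  qed
qed

theorem lemma4p8:
  fixes k :: nat and \<alpha> r p \<eta>2 \<eta>3 \<mu> \<beta> :: real
  assumes "k \<ge> 2" and "\<alpha> > 0" and "r > 0" and "0 < p" and "p < 1"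
    and "(2 * real k - 1) * \<alpha> > 1" and "real k * \<alpha> \<le> 1"
    and "real k \<ge> tau p * ln (tau p) / (tau p - 1)"
    and "r < r_cr p"
    and "0 < \<eta>2" and "\<eta>2 < \<eta>3" and "\<eta>3 < 1"
    and "alpha0 k \<alpha> / \<alpha> - \<mu> * \<eta>2 ^ (k - 1) > 0"
    and "\<mu> > real k * p * r / (1 - p)"
    and "r * ln (1 - p) + \<eta>3 > 0"
    and beta_def: "- \<beta> = (SUP s \<in> {\<eta>2..\<eta>3}. phi k r p s)"
  shows "\<beta> > 0 \<and>
    (\<exists>g :: nat \<Rightarrow> real. g \<longlonglongrightarrow> 0 \<and>
      (\<forall>\<^sub>F n in sequentially. \<forall>S :: nat.
         \<eta>2 \<le> real S / real n \<and> real S / real n \<le> \<eta>3 \<longrightarrow>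
         Phi k \<alpha> r p n S \<le> exp (- (\<beta> + g n) * mm \<alpha> n)))"
proof -
  have "ln (tau p) > 0"
    using assms(4,5) by (simp add: tau_def)
  then have slope: "r * ln (tau p) < 1"
    using assms(9) by (simp add: r_cr_def field_simps)
  note SUP_phi = SUP_phi_le[of k r p \<eta>2 \<eta>3]
  have "\<eta>2 * (r * ln (tau p) - 1) < 0"
    using assms(10) slope by (intro mult_pos_neg) auto
  then have "\<beta> > 0"
    using SUP_phi(2) slope assms unfolding beta_def[symmetric] by auto
  moreover have "phi k r p s \<le> - \<beta>" if "s \<in> {\<eta>2..\<eta>3}" for s
    unfolding beta_def using SUP_phi(1) slope assms that by (intro cSUP_upper) auto
  then have "\<forall>\<^sub>F n in sequentially. \<forall>S :: nat.
      \<eta>2 \<le> real S / real n \<and> real S / real n \<le> \<eta>3 \<longrightarrow>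
      Phi k \<alpha> r p n S \<le> exp (- (\<beta> - ln 2 / (\<alpha> * ln (real n))) * mm \<alpha> n)"
    using assms(1-5,10-12) by (intro eventually_Phi_le_exp) auto
  moreover have "(\<lambda>n. - ln 2 / (\<alpha> * ln (real n))) \<longlonglongrightarrow> 0"
    using assms(2) by real_asymp
  ultimately show ?thesis
    by (intro conjI exI[of _ "\<lambda>n. - ln 2 / (\<alpha> * ln (real n))"]) simp_all
qed

end
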